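(* Let $\Omega\in\mathbb{R}^{n\times n}$ be a DCBM Bernoulli probability matrix, i.e. $\Omega=\Theta\Pi P\Pi'\Theta$ for some $\Theta=\mathrm{diag}(\theta)$ with $\theta\in(0,\infty)^n$, some membership matrix $\Pi$ whose $K$ community fractions $h_1,\dots,h_K$ are all positive, and some symmetric nonnegative $P\in\mathbb{R}^{K\times K}$, and suppose $\Omega$ has strictly positive diagonal entries. Then there exist $(\Theta,\Pi,P)$ (with $\Pi$ unchanged) such that $\Omega=\Theta\Pi P\Pi'\Theta$ and $$\|\theta\|_1=n,\qquad Ph\propto \mathbf{1}_K,\quad h=(h_1,\dots,h_K)'.$$ Moreover, for fixed $\Pi$, any two pairs $(\Theta,P)$ satisfying $\Omega=\Theta\Pi P\Pi'\Theta$ together with these two conditions are equal.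
   Context: Degree-corrected block model (DCBM): an $n$-node network with $K$ communities $\mathcal{C}_1,\dots,\mathcal{C}_K$ partitioning $\{1,\dots,n\}$; $\theta=(\theta_1,\dots,\theta_n)'$ with $\theta_i>0$, $\Theta=\mathrm{diag}(\theta)$; $\Pi=[\pi_1,\dots,\pi_n]'\in\{0,1\}^{n\times K}$ with $\pi_i=e_k$ iff $i\in\mathcal{C}_k$; $P\in\mathbb{R}^{K\times K}$ symmetric with nonnegative entries; $\Omega=\Theta\Pi P\Pi'\Theta$. $h_k=|\mathcal{C}_k|/n$ is the fraction of nodes in community $k$. $Ph\propto\mathbf{1}_K$ means $Ph=t\mathbf{1}_K$ for some scalar $t>0$. *)

theory Defs
  imports "Jordan_Normal_Form.Matrix"
begin

definition membership_mat :: "nat \<Rightarrow> nat \<Rightarrow> real mat \<Rightarrow> bool" where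
  "membership_mat n K Pm \<longleftrightarrow> Pm \<in> carrier_mat n K
     \<and> (\<forall>i<n. \<forall>k<K. Pm $$ (i,k) = 0 \<or> Pm $$ (i,k) = 1)
     \<and> (\<forall>i<n. \<exists>!k. k < K \<and> Pm $$ (i,k) = 1)"

definition comm_frac :: "real mat \<Rightarrow> real vec" where
  "comm_frac Pm = vec (dim_col Pm)
     (\<lambda>k. real (card {i. i < dim_row Pm \<and> Pm $$ (i,k) = 1}) / real (dim_row Pm))"

definition Theta_mat :: "real vec \<Rightarrow> real mat" where
  "Theta_mat \<theta> = mat (dim_vec \<theta>) (dim_vec \<theta>) (\<lambda>(i,j). if i = j then \<theta> $ i else 0)"

definition dcbm_Omega :: "real vec \<Rightarrow> real mat \<Rightarrow> real mat \<Rightarrow> real mat" where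
  "dcbm_Omega \<theta> Pm P = Theta_mat \<theta> * Pm * P * transpose_mat Pm * Theta_mat \<theta>"

definition dcbm_params :: "nat \<Rightarrow> nat \<Rightarrow> real vec \<Rightarrow> real mat \<Rightarrow> bool" where
  "dcbm_params n K \<theta> P \<longleftrightarrow> \<theta> \<in> carrier_vec n \<and> (\<forall>i<n. \<theta> $ i > 0)
     \<and> P \<in> carrier_mat K K \<and> transpose_mat P = P \<and> (\<forall>k<K. \<forall>l<K. P $$ (k,l) \<ge> 0)"

definition dcbm_normalized :: "nat \<Rightarrow> nat \<Rightarrow> real vec \<Rightarrow> real mat \<Rightarrow> real mat \<Rightarrow> bool" where
  "dcbm_normalized n K \<theta> Pm P \<longleftrightarrow> (\<Sum>i<n. \<bar>\<theta> $ i\<bar>) = real n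
     \<and> (\<exists>t>0. P *\<^sub>v comm_frac Pm = t \<cdot>\<^sub>v vec K (\<lambda>_. 1))"

end

theory Submission
  imports Defs "HOL-Analysis.Function_Topology"
begin

(* Rescaling theta_i by w (c i) and P_kl by 1 / (w_k w_l), where c i is the community of node i,
   leaves Omega unchanged; when P has a positive diagonal, every other parametrization of Omega
   arises in this way. Writing v = 1 / w, the condition P h = t 1 becomes the symmetric scaling
   equation v_k * sum_l P_kl h_l v_l = const. A solution exists: it is a maximizer of the potential
   sum_k h_k ln v_k - 1/2 sum_kl h_k h_l P_kl v_k v_l, which tends to -infinity at the boundary of the
   positive orthant and at infinity. It is unique up to a constant factor: by the Lagrange identity
   each row k has a nonnegative Cauchy-Schwarz defect, the h_k v_k-weighted sum of these defects
   vanishes, and a vanishing defect forces v to be constant on the support of the row, which contains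
   the diagonal. Finally ||theta||_1 = n fixes the constant. *)

section \<open>Entries of a DCBM probability matrix\<close>

definition community :: "nat \<Rightarrow> real mat \<Rightarrow> nat \<Rightarrow> nat" where
  "community K Pm i = (THE k. k < K \<and> Pm $$ (i,k) = 1)"

lemma community:
  assumes "membership_mat n K Pm" "i < n"
  shows "community K Pm i < K" "Pm $$ (i, community K Pm i) = 1"
proof -
  have "\<exists>!k. k < K \<and> Pm $$ (i,k) = 1" using assms unfolding membership_mat_def by auto
  from theI'[OF this] show "community K Pm i < K" "Pm $$ (i, community K Pm i) = 1"
    unfolding community_def by simp_all
qed

lemma membership_mat_index:
  assumes "membership_mat n K Pm" "i < n" "k < K"
  shows "Pm $$ (i,k) = (if k = community K Pm i then 1 else 0)"
proof -
  have "\<exists>!k. k < K \<and> Pm $$ (i,k) = 1" "Pm $$ (i,k) = 0 \<or> Pm $$ (i,k) = 1"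
    using assms unfolding membership_mat_def by auto
  then show ?thesis using community[OF assms(1,2)] assms(3) by auto
qed

lemma membership_mat_carrier: "membership_mat n K Pm \<Longrightarrow> Pm \<in> carrier_mat n K"
  unfolding membership_mat_def by simp

lemma membership_mult_index:
  assumes Pm: "membership_mat n K Pm" and A: "A \<in> carrier_mat K m" and "i < n" "j < m"
  shows "(Pm * A) $$ (i,j) = A $$ (community K Pm i, j)"
proof -
  have "(Pm * A) $$ (i,j) = (\<Sum>k\<in>{0..<K}. Pm $$ (i,k) * A $$ (k,j))"
    using assms membership_mat_carrier[OF Pm] by (simp add: scalar_prod_def)
  also have "\<dots> = (\<Sum>k\<in>{0..<K}. if k = community K Pm i then A $$ (k,j) else 0)"
    using membership_mat_index[OF Pm \<open>i < n\<close>] by (intro sum.cong) auto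
  finally show ?thesis using community[OF Pm \<open>i < n\<close>] by simp
qed

lemma mult_transpose_membership_index:
  assumes Pm: "membership_mat n K Pm" and A: "A \<in> carrier_mat m K" and "i < m" "j < n"
  shows "(A * transpose_mat Pm) $$ (i,j) = A $$ (i, community K Pm j)"
proof -
  have "(A * transpose_mat Pm) $$ (i,j) = (\<Sum>k\<in>{0..<K}. A $$ (i,k) * Pm $$ (j,k))"
    using assms membership_mat_carrier[OF Pm] by (simp add: scalar_prod_def)
  also have "\<dots> = (\<Sum>k\<in>{0..<K}. if k = community K Pm j then A $$ (i,k) else 0)"
    using membership_mat_index[OF Pm \<open>j < n\<close>] by (intro sum.cong) auto
  finally show ?thesis using community[OF Pm \<open>j < n\<close>] by simp
qed

lemma Theta_mat_carrier: "\<theta> \<in> carrier_vec n \<Longrightarrow> Theta_mat \<theta> \<in> carrier_mat n n"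
  unfolding Theta_mat_def by simp

lemma Theta_mult_index:
  assumes "\<theta> \<in> carrier_vec n" "A \<in> carrier_mat n m" "i < n" "j < m"
  shows "(Theta_mat \<theta> * A) $$ (i,j) = \<theta> $ i * A $$ (i,j)"
proof -
  have "(Theta_mat \<theta> * A) $$ (i,j) = (\<Sum>k\<in>{0..<n}. Theta_mat \<theta> $$ (i,k) * A $$ (k,j))"
    using assms by (simp add: Theta_mat_def scalar_prod_def)
  also have "\<dots> = (\<Sum>k\<in>{0..<n}. if k = i then \<theta> $ i * A $$ (k,j) else 0)"
    using assms by (intro sum.cong) (auto simp: Theta_mat_def)
  finally show ?thesis using assms by simp
qed

lemma mult_Theta_index:
  assumes "\<theta> \<in> carrier_vec n" "A \<in> carrier_mat m n" "i < m" "j < n"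
  shows "(A * Theta_mat \<theta>) $$ (i,j) = A $$ (i,j) * \<theta> $ j"
proof -
  have "(A * Theta_mat \<theta>) $$ (i,j) = (\<Sum>k\<in>{0..<n}. A $$ (i,k) * Theta_mat \<theta> $$ (k,j))"
    using assms by (simp add: Theta_mat_def scalar_prod_def)
  also have "\<dots> = (\<Sum>k\<in>{0..<n}. if k = j then A $$ (i,k) * \<theta> $ j else 0)"
    using assms by (intro sum.cong) (auto simp: Theta_mat_def)
  finally show ?thesis using assms by simp
qed

lemma dcbm_Omega_carrier:
  assumes "membership_mat n K Pm" "\<theta> \<in> carrier_vec n" "P \<in> carrier_mat K K"
  shows "dcbm_Omega \<theta> Pm P \<in> carrier_mat n n"
  using assms unfolding dcbm_Omega_def Theta_mat_def membership_mat_def by auto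

lemma dcbm_Omega_index:
  assumes Pm: "membership_mat n K Pm" and \<theta>: "\<theta> \<in> carrier_vec n" and P: "P \<in> carrier_mat K K"
    and i: "i < n" and j: "j < n"
  shows "dcbm_Omega \<theta> Pm P $$ (i,j) = \<theta> $ i * \<theta> $ j * P $$ (community K Pm i, community K Pm j)"
proof -
  define B where "B = Pm * P * transpose_mat Pm"
  have Pmc: "Pm \<in> carrier_mat n K" using membership_mat_carrier[OF Pm] .
  have PmP: "Pm * P \<in> carrier_mat n K" using Pmc P by simp
  have Bc: "B \<in> carrier_mat n n" using PmP Pmc by (simp add: B_def)
  have "Theta_mat \<theta> * Pm * P = Theta_mat \<theta> * (Pm * P)"
    using Theta_mat_carrier[OF \<theta>] Pmc P by (rule assoc_mult_mat)
  moreover have "Theta_mat \<theta> * (Pm * P) * transpose_mat Pm = Theta_mat \<theta> * B"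
    unfolding B_def using Theta_mat_carrier[OF \<theta>] PmP transpose_carrier_mat[THEN iffD2, OF Pmc]
    by (rule assoc_mult_mat)
  ultimately have "Theta_mat \<theta> * Pm * P * transpose_mat Pm = Theta_mat \<theta> * B" by simp
  then have "dcbm_Omega \<theta> Pm P = Theta_mat \<theta> * B * Theta_mat \<theta>"
    unfolding dcbm_Omega_def by simp
  also have "\<dots> $$ (i,j) = \<theta> $ i * B $$ (i,j) * \<theta> $ j"
    using Theta_mat_carrier[OF \<theta>] Bc i j
    by (simp only: mult_Theta_index[OF \<theta> mult_carrier_mat[OF _ Bc] i j] Theta_mult_index[OF \<theta> Bc i j])
  also have "B $$ (i,j) = P $$ (community K Pm i, community K Pm j)"
    unfolding B_def using i j community[OF Pm]
    by (simp add: mult_transpose_membership_index[OF Pm PmP] membership_mult_index[OF Pm P])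
  finally show ?thesis by simp
qed

lemma dcbm_paramsD:
  assumes "dcbm_params n K \<theta> P"
  shows "\<theta> \<in> carrier_vec n" "\<And>i. i < n \<Longrightarrow> 0 < \<theta> $ i" "P \<in> carrier_mat K K"
    "\<And>k l. k < K \<Longrightarrow> l < K \<Longrightarrow> P $$ (k,l) = P $$ (l,k)"
    "\<And>k l. k < K \<Longrightarrow> l < K \<Longrightarrow> 0 \<le> P $$ (k,l)"
proof -
  show "\<theta> \<in> carrier_vec n" "\<And>i. i < n \<Longrightarrow> 0 < \<theta> $ i" "P \<in> carrier_mat K K"
    "\<And>k l. k < K \<Longrightarrow> l < K \<Longrightarrow> 0 \<le> P $$ (k,l)"
    using assms unfolding dcbm_params_def by auto
  fix k l assume "k < K" "l < K"
  then show "P $$ (k,l) = P $$ (l,k)"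
    using assms index_transpose_mat(1)[of l P k] unfolding dcbm_params_def by auto
qed

lemma dcbm_Omega_eq_iff:
  assumes Pm: "membership_mat n K Pm"
    and "\<theta>1 \<in> carrier_vec n" "P1 \<in> carrier_mat K K" "\<theta>2 \<in> carrier_vec n" "P2 \<in> carrier_mat K K"
  shows "dcbm_Omega \<theta>1 Pm P1 = dcbm_Omega \<theta>2 Pm P2 \<longleftrightarrow>
    (\<forall>i<n. \<forall>j<n. \<theta>1 $ i * \<theta>1 $ j * P1 $$ (community K Pm i, community K Pm j)
                = \<theta>2 $ i * \<theta>2 $ j * P2 $$ (community K Pm i, community K Pm j))"
  using dcbm_Omega_carrier[OF Pm] dcbm_Omega_index[OF Pm] assms
  by (metis (no_types, lifting) carrier_matD eq_matI)

lemma comm_frac_dim: "membership_mat n K Pm \<Longrightarrow> dim_vec (comm_frac Pm) = K"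
  unfolding comm_frac_def membership_mat_def by auto

lemma community_surj:
  assumes Pm: "membership_mat n K Pm" and k: "k < K" and "0 < comm_frac Pm $ k"
  shows "\<exists>i<n. community K Pm i = k"
proof -
  have "0 < card {i. i < n \<and> Pm $$ (i,k) = 1}"
    using assms unfolding comm_frac_def membership_mat_def by (auto simp: zero_less_divide_iff)
  then have "{i. i < n \<and> Pm $$ (i,k) = 1} \<noteq> {}" by (metis card.empty less_irrefl)
  then obtain i where "i < n" "Pm $$ (i,k) = 1" by auto
  then show ?thesis using membership_mat_index[OF Pm _ k] by (auto split: if_splits)
qed

lemma mult_mat_vec_eq_const_iff:
  fixes P :: "'a :: comm_ring_1 mat"
  assumes "P \<in> carrier_mat K K" "dim_vec x = K"
  shows "P *\<^sub>v x = t \<cdot>\<^sub>v vec K (\<lambda>_. 1) \<longleftrightarrow> (\<forall>k<K. (\<Sum>l<K. P $$ (k,l) * x $ l) = t)"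
  using assms by (auto simp: vec_eq_iff scalar_prod_def atLeast0LessThan)

lemma dcbm_Omega_rescale:
  assumes Pm: "membership_mat n K Pm" and \<theta>: "\<theta> \<in> carrier_vec n" and P: "P \<in> carrier_mat K K"
    and w: "\<And>k. k < K \<Longrightarrow> w k \<noteq> 0"
  shows "dcbm_Omega (vec n (\<lambda>i. w (community K Pm i) * \<theta> $ i)) Pm
      (mat K K (\<lambda>(k,l). P $$ (k,l) / (w k * w l))) = dcbm_Omega \<theta> Pm P"
  using assms community[OF Pm] by (subst dcbm_Omega_eq_iff[OF Pm]) (auto simp: field_simps)

lemma dcbm_Omega_diag_pos:
  assumes Pm: "membership_mat n K Pm" and par: "dcbm_params n K \<theta> P"
    and diag: "0 < dcbm_Omega \<theta> Pm P $$ (i,i)" and i: "i < n"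
  shows "0 < P $$ (community K Pm i, community K Pm i)"
proof -
  have "0 < \<theta> $ i * \<theta> $ i * P $$ (community K Pm i, community K Pm i)"
    using diag dcbm_Omega_index[OF Pm dcbm_paramsD(1,3)[OF par] i i] by simp
  then show ?thesis using dcbm_paramsD(2)[OF par i] by (simp add: zero_less_mult_iff)
qed

section \<open>Symmetric scaling of a weighted nonnegative matrix\<close>

lemma lagrange_identity_reciprocal:
  fixes a v :: "nat \<Rightarrow> real"
  assumes "finite S" "\<And>l. l \<in> S \<Longrightarrow> v l > 0"
  shows "(\<Sum>l\<in>S. \<Sum>m\<in>S. a l * a m * (v l - v m)^2 / (v l * v m))
       = 2 * ((\<Sum>l\<in>S. a l * v l) * (\<Sum>m\<in>S. a m / v m) - (\<Sum>l\<in>S. a l)^2)"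
proof -
  have summand: "a l * a m * (v l - v m)^2 / (v l * v m)
      = (a l * v l) * (a m / v m) + (a m * v m) * (a l / v l) - 2 * (a l * a m)"
    if "l \<in> S" "m \<in> S" for l m
    using assms(2)[OF that(1)] assms(2)[OF that(2)] by (simp add: field_simps power2_eq_square)
  have "(\<Sum>l\<in>S. \<Sum>m\<in>S. a l * a m * (v l - v m)^2 / (v l * v m))
     = (\<Sum>l\<in>S. \<Sum>m\<in>S. (a l * v l) * (a m / v m)) + (\<Sum>l\<in>S. \<Sum>m\<in>S. (a m * v m) * (a l / v l))
       - 2 * (\<Sum>l\<in>S. \<Sum>m\<in>S. a l * a m)"
    by (simp add: summand sum.distrib sum_subtractf sum_distrib_left)
  also have "(\<Sum>l\<in>S. \<Sum>m\<in>S. (a m * v m) * (a l / v l)) = (\<Sum>l\<in>S. \<Sum>m\<in>S. (a l * v l) * (a m / v m))"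
    by (rule sum.swap)
  finally show ?thesis
    by (simp add: sum_product power2_eq_square)
qed

lemma ln_sub_quadratic_le:
  fixes h \<alpha> s :: real
  assumes "0 \<le> h" "0 < \<alpha>" "0 < s"
  shows "h * ln s - \<alpha> * s^2 \<le> h^2 / (4 * \<alpha>)"
proof -
  have "h * ln s \<le> h * s"
    using assms ln_le_minus_one[of s] by (intro mult_left_mono) auto
  moreover have "4 * \<alpha> * (h * s - \<alpha> * s^2) \<le> h^2"
    using zero_le_power2[of "2 * \<alpha> * s - h"] by (simp add: power2_eq_square algebra_simps)
  then have "h * s - \<alpha> * s^2 \<le> h^2 / (4 * \<alpha>)"
    using assms(2) by (simp add: field_simps)
  ultimately show ?thesis by linarith
qed

lemma ln_sub_quadratic_le_outside:
  fixes h \<alpha> c :: real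
  assumes h: "0 < h" and \<alpha>: "0 < \<alpha>"
  obtains a b where "0 < a" "a \<le> 1" "1 \<le> b"
    "\<And>s. 0 < s \<Longrightarrow> s \<le> a \<or> b \<le> s \<Longrightarrow> h * ln s - \<alpha> * s^2 \<le> c"
proof
  define a where "a = min 1 (exp (c / h))"
  define b where "b = max 1 ((h + \<bar>c\<bar>) / \<alpha>)"
  show "0 < a" "a \<le> 1" "1 \<le> b" by (simp_all add: a_def b_def)
  fix s :: real assume s: "0 < s" "s \<le> a \<or> b \<le> s"
  then consider "s \<le> a" | "b \<le> s" by blast
  then show "h * ln s - \<alpha> * s^2 \<le> c"
  proof cases
    case 1
    then have "s \<le> exp (c / h)" by (simp add: a_def)
    then have "ln s \<le> c / h" using s(1) by (metis ln_exp ln_le_cancel_iff exp_gt_zero)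
    then have "h * ln s \<le> c" using h by (simp add: field_simps)
    moreover have "0 \<le> \<alpha> * s^2" using \<alpha> by simp
    ultimately show ?thesis by linarith
  next
    case 2
    then have "1 \<le> s" "h + \<bar>c\<bar> \<le> \<alpha> * s" using \<alpha> by (auto simp: b_def field_simps)
    have "h * ln s \<le> h * s"
      using h s(1) ln_le_minus_one[of s] by (intro mult_left_mono) auto
    moreover have "(h + \<bar>c\<bar>) * s \<le> \<alpha> * s^2"
      using \<open>h + \<bar>c\<bar> \<le> \<alpha> * s\<close> s(1) by (simp add: power2_eq_square mult_right_mono mult.assoc)
    moreover have "\<bar>c\<bar> \<le> \<bar>c\<bar> * s" using \<open>1 \<le> s\<close> by (simp add: mult_le_cancel_left1)
    ultimately show ?thesis by (auto simp: algebra_simps)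
  qed
qed

locale weighted_sym_matrix =
  fixes K :: nat and h :: "nat \<Rightarrow> real" and P :: "nat \<Rightarrow> nat \<Rightarrow> real"
  assumes weight_pos: "k < K \<Longrightarrow> 0 < h k"
    and nonneg: "k < K \<Longrightarrow> l < K \<Longrightarrow> 0 \<le> P k l"
    and sym: "k < K \<Longrightarrow> l < K \<Longrightarrow> P k l = P l k"
    and diag_pos: "k < K \<Longrightarrow> 0 < P k k"
begin

lemma weight_nonneg: "k < K \<Longrightarrow> 0 \<le> h k"
  using weight_pos less_imp_le by blast

lemma weighted_sum_rows:
  assumes rows: "\<And>k. k < K \<Longrightarrow> (\<Sum>l<K. P k l * h l) = t"
  shows "(\<Sum>k<K. h k * (\<Sum>l<K. P k l * h l * w l)) = t * (\<Sum>l<K. h l * w l)"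
proof -
  have "(\<Sum>k<K. h k * (\<Sum>l<K. P k l * h l * w l)) = (\<Sum>l<K. (\<Sum>k<K. P l k * h k) * (h l * w l))"
    by (auto simp: sum_distrib_left sum_distrib_right sym mult_ac intro: sum.swap[THEN trans] sum.cong)
  also have "\<dots> = t * (\<Sum>l<K. h l * w l)"
    by (simp add: rows sum_distrib_left)
  finally show ?thesis .
qed

definition row_defect :: "(nat \<Rightarrow> real) \<Rightarrow> nat \<Rightarrow> real" where
  "row_defect v k = (\<Sum>l<K. \<Sum>m<K. (P k l * h l) * (P k m * h m) * (v l - v m)^2 / (v l * v m))"

lemma row_defect_summand_nonneg:
  assumes "\<And>k. k < K \<Longrightarrow> 0 < v k" "k < K" "l < K" "m < K"
  shows "0 \<le> (P k l * h l) * (P k m * h m) * (v l - v m)^2 / (v l * v m)"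
  using assms nonneg weight_pos by (intro divide_nonneg_pos mult_nonneg_nonneg) (auto intro: less_imp_le)

lemma row_defect_nonneg: "(\<And>k. k < K \<Longrightarrow> 0 < v k) \<Longrightarrow> k < K \<Longrightarrow> 0 \<le> row_defect v k"
  unfolding row_defect_def by (intro sum_nonneg) (auto intro: row_defect_summand_nonneg)

lemma row_defect_eq:
  assumes "\<And>k. k < K \<Longrightarrow> 0 < v k"
  shows "row_defect v k
    = 2 * ((\<Sum>l<K. P k l * h l * v l) * (\<Sum>l<K. P k l * h l / v l) - (\<Sum>l<K. P k l * h l)^2)"
  unfolding row_defect_def by (rule lagrange_identity_reciprocal) (auto simp: mult.assoc assms)

lemma row_defect_eq_0D:
  assumes vpos: "\<And>k. k < K \<Longrightarrow> 0 < v k" and "row_defect v k = 0" "k < K" "l < K"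
  shows "P k l * v l = P k l * v k"
proof -
  have "\<forall>l\<in>{..<K}. (\<Sum>m<K. (P k l * h l) * (P k m * h m) * (v l - v m)^2 / (v l * v m)) = 0"
    using assms(2,3) row_defect_summand_nonneg[OF vpos] unfolding row_defect_def
    by (subst (asm) sum_nonneg_eq_0_iff) (auto intro!: sum_nonneg)
  then have "(\<Sum>m<K. (P k l * h l) * (P k m * h m) * (v l - v m)^2 / (v l * v m)) = 0"
    using assms(4) by blast
  then have "\<forall>m\<in>{..<K}. (P k l * h l) * (P k m * h m) * (v l - v m)^2 / (v l * v m) = 0"
    using assms(3,4) row_defect_summand_nonneg[OF vpos] by (subst (asm) sum_nonneg_eq_0_iff) auto
  then have "(P k l * h l) * (P k k * h k) * (v l - v k)^2 / (v l * v k) = 0"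
    using assms by blast
  then show ?thesis using assms weight_pos diag_pos by fastforce
qed

lemma scaling_const:
  assumes t: "0 < t" and rows: "\<And>k. k < K \<Longrightarrow> (\<Sum>l<K. P k l * h l) = t"
    and vpos: "\<And>k. k < K \<Longrightarrow> 0 < v k"
    and eq: "\<And>k. k < K \<Longrightarrow> v k * (\<Sum>l<K. P k l * h l * v l) = d"
    and k0: "k0 < K"
  shows "v k0 ^ 2 * t = d"
proof -
  define A where "A k = (\<Sum>l<K. P k l * h l * v l)" for k
  define B where "B k = (\<Sum>l<K. P k l * h l / v l)" for k
  have vA: "v k * A k = d" if "k < K" for k
    using eq that by (simp add: A_def)
  have "(\<Sum>k<K. h k * v k * row_defect v k) = 0"
  proof -
    have "h k * v k * row_defect v k = 2 * (d * (h k * B k) - t^2 * (h k * v k))" if "k < K" for k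
      using row_defect_eq[of v k, OF vpos] rows[OF that]
      by (simp add: A_def[symmetric] B_def[symmetric] flip: vA[OF that]) (simp add: algebra_simps)
    then have "(\<Sum>k<K. h k * v k * row_defect v k) = (\<Sum>k<K. 2 * (d * (h k * B k) - t^2 * (h k * v k)))"
      by (intro sum.cong) auto
    also have "\<dots> = 2 * (d * (\<Sum>k<K. h k * B k) - t^2 * (\<Sum>k<K. h k * v k))"
      by (simp add: sum_subtractf sum_distrib_left)
    also have "(\<Sum>k<K. h k * B k) = t * (\<Sum>l<K. h l * (1 / v l))"
      unfolding B_def using weighted_sum_rows[OF rows, of "\<lambda>l. 1 / v l"] by simp
    also have "d * (t * (\<Sum>l<K. h l * (1 / v l))) = t * (\<Sum>k<K. h k * A k)"
      by (auto simp: sum_distrib_left vA[symmetric] vpos less_imp_neq[symmetric] intro!: sum.cong)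
    also have "(\<Sum>k<K. h k * A k) = t * (\<Sum>l<K. h l * v l)"
      unfolding A_def using weighted_sum_rows[OF rows, of v] by simp
    finally show ?thesis by (simp add: power2_eq_square)
  qed
  then have "\<forall>k\<in>{..<K}. h k * v k * row_defect v k = 0"
    by (subst (asm) sum_nonneg_eq_0_iff)
      (auto intro!: mult_nonneg_nonneg weight_nonneg row_defect_nonneg vpos less_imp_le[OF vpos])
  then have "h k0 * v k0 * row_defect v k0 = 0" using k0 by blast
  then have "row_defect v k0 = 0" using weight_pos[OF k0] vpos[OF k0] by simp
  then have "A k0 = (\<Sum>l<K. P k0 l * h l * v k0)"
    unfolding A_def using row_defect_eq_0D[of v, OF vpos _ k0] by (intro sum.cong) (auto simp: mult_ac)
  then have "A k0 = t * v k0"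
    unfolding rows[OF k0, symmetric] by (simp add: sum_distrib_right)
  then show ?thesis using vA[OF k0] by (simp add: power2_eq_square algebra_simps)
qed

definition potential :: "(nat \<Rightarrow> real) \<Rightarrow> real" where
  "potential w = (\<Sum>k<K. h k * ln (w k)) - (\<Sum>k<K. \<Sum>l<K. h k * h l * P k l * w k * w l) / 2"

lemma potential_le_coordinate:
  assumes wpos: "\<And>k. k < K \<Longrightarrow> 0 < w k" and k0: "k0 < K"
  shows "potential w \<le> h k0 * ln (w k0) - h k0^2 * P k0 k0 / 2 * w k0^2 + (\<Sum>k<K. 1 / (2 * P k k))"
proof -
  define g where "g k = h k * ln (w k) - h k^2 * P k k / 2 * w k^2" for k
  have g_le: "g k \<le> 1 / (2 * P k k)" if "k < K" for k
  proof -
    have "g k \<le> h k^2 / (4 * (h k^2 * P k k / 2))"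
      unfolding g_def using weight_pos[OF that] diag_pos[OF that] wpos[OF that]
      by (intro ln_sub_quadratic_le) simp_all
    then show ?thesis using weight_pos[OF that] by (simp add: power2_eq_square)
  qed
  have diag_le: "(\<Sum>k<K. h k^2 * P k k * w k^2) \<le> (\<Sum>k<K. \<Sum>l<K. h k * h l * P k l * w k * w l)"
  proof (rule sum_mono)
    fix k assume k: "k \<in> {..<K}"
    have "h k * h k * P k k * w k * w k \<le> (\<Sum>l<K. h k * h l * P k l * w k * w l)"
      using k by (intro member_le_sum[where f = "\<lambda>l. h k * h l * P k l * w k * w l"])
        (auto intro!: mult_nonneg_nonneg nonneg weight_nonneg less_imp_le[OF wpos])
    then show "h k^2 * P k k * w k^2 \<le> (\<Sum>l<K. h k * h l * P k l * w k * w l)"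
      by (simp add: power2_eq_square mult_ac)
  qed
  have "(\<Sum>k<K. g k) = (\<Sum>k<K. h k * ln (w k)) - (\<Sum>k<K. h k^2 * P k k * w k^2) / 2"
    by (simp add: g_def sum_subtractf sum_divide_distrib)
  then have "potential w \<le> (\<Sum>k<K. g k)"
    using diag_le by (simp add: potential_def)
  also have "\<dots> = g k0 + (\<Sum>k\<in>{..<K} - {k0}. g k)"
    using k0 by (simp add: sum.remove)
  also have "\<dots> \<le> g k0 + (\<Sum>k\<in>{..<K} - {k0}. 1 / (2 * P k k))"
    using g_le by (auto intro!: sum_mono)
  also have "\<dots> \<le> g k0 + (\<Sum>k<K. 1 / (2 * P k k))"
    using k0 diag_pos by (intro add_left_mono sum_mono2) (auto intro: less_imp_le)
  finally show ?thesis by (simp add: g_def)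
qed

lemma potential_cong: "(\<And>k. k < K \<Longrightarrow> w k = w' k) \<Longrightarrow> potential w = potential w'"
  unfolding potential_def by simp

lemma potential_coercive:
  obtains lo hi where "0 < lo" "lo \<le> 1" "1 \<le> hi"
    "\<And>w k. (\<And>k. k < K \<Longrightarrow> 0 < w k) \<Longrightarrow> k < K \<Longrightarrow> w k < lo \<or> hi < w k \<Longrightarrow>
      potential w \<le> potential (\<lambda>_. 1)"
proof -
  define U where "U = (\<Sum>k<K. 1 / (2 * P k k))"
  define C where "C = potential (\<lambda>_. 1) - U"
  have "\<exists>a b. 0 < a \<and> 1 \<le> b \<and>
      (\<forall>s>0. s \<le> a \<or> b \<le> s \<longrightarrow> h k * ln s - h k^2 * P k k / 2 * s^2 \<le> C)" if "k < K" for k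
  proof -
    have "0 < h k^2 * P k k / 2" using weight_pos[OF that] diag_pos[OF that] by simp
    with weight_pos[OF that] show ?thesis
      by (rule ln_sub_quadratic_le_outside[where c = C]) blast
  qed
  then obtain a b where a: "\<And>k. k < K \<Longrightarrow> 0 < a k" and b: "\<And>k. k < K \<Longrightarrow> 1 \<le> b k"
    and outside: "\<And>k s. k < K \<Longrightarrow> 0 < s \<Longrightarrow> s \<le> a k \<or> b k \<le> s \<Longrightarrow>
        h k * ln s - h k^2 * P k k / 2 * s^2 \<le> C"
    by metis
  define lo where "lo = Min (insert 1 (a ` {..<K}))"
  define hi where "hi = Max (insert 1 (b ` {..<K}))"
  show thesis
  proof
    show "0 < lo" "lo \<le> 1" using a by (auto simp: lo_def Min_gr_iff)
    show "1 \<le> hi" by (simp add: hi_def)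
    fix w k assume wpos: "\<And>k. k < K \<Longrightarrow> 0 < w k" and k: "k < K" "w k < lo \<or> hi < w k"
    have "lo \<le> a k" "b k \<le> hi" using k(1) by (auto simp: lo_def hi_def)
    then have "w k \<le> a k \<or> b k \<le> w k" using k(2) by linarith
    then show "potential w \<le> potential (\<lambda>_. 1)"
      using potential_le_coordinate[of w, OF wpos k(1)] outside[OF k(1) wpos[OF k(1)]]
      by (simp add: U_def C_def)
  qed
qed

lemma potential_max_exists:
  obtains v where "\<And>k. k < K \<Longrightarrow> 0 < v k"
    "\<And>w. (\<And>k. k < K \<Longrightarrow> 0 < w k) \<Longrightarrow> potential w \<le> potential v"
proof -
  obtain lo hi where lo: "0 < lo" "lo \<le> 1" and hi: "1 \<le> hi"
    and coercive: "\<And>w k. (\<And>k. k < K \<Longrightarrow> 0 < w k) \<Longrightarrow> k < K \<Longrightarrow> w k < lo \<or> hi < w k \<Longrightarrow>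
      potential w \<le> potential (\<lambda>_. 1)"
    using potential_coercive by blast
  define box where "box = PiE UNIV (\<lambda>k. if k < K then {lo..hi} else {1::real})"
  have box_pos: "0 < w k" if "w \<in> box" "k < K" for w k
  proof -
    have "lo \<le> w k" using that by (auto simp: box_def PiE_iff dest: spec[of _ k])
    then show ?thesis using lo(1) by linarith
  qed
  have "compact box"
  proof -
    have "compactin (product_topology (\<lambda>_. euclidean) UNIV) box"
      unfolding box_def by (subst compactin_PiE) auto
    then show ?thesis by (simp add: euclidean_product_topology)
  qed
  moreover have "continuous_on box potential"
    unfolding potential_def using box_pos
    by (auto intro!: continuous_intros continuous_on_subset[OF continuous_on_product_coordinates]
        simp: less_imp_neq[symmetric])
  moreover have one: "(\<lambda>_. 1) \<in> box" using lo hi by (auto simp: box_def)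
  ultimately obtain v where v: "v \<in> box" and vmax: "\<And>w. w \<in> box \<Longrightarrow> potential w \<le> potential v"
    using continuous_attains_sup[of box potential] by blast
  show thesis
  proof
    show "0 < v k" if "k < K" for k using box_pos[OF v that] .
  next
    fix w :: "nat \<Rightarrow> real" assume wpos: "\<And>k. k < K \<Longrightarrow> 0 < w k"
    define w' where "w' k = (if k < K then w k else 1)" for k
    have "potential w = potential w'" by (rule potential_cong) (simp add: w'_def)
    show "potential w \<le> potential v"
    proof (cases "w' \<in> box")
      case True
      then show ?thesis using \<open>potential w = potential w'\<close> vmax by simp
    next
      case False
      then obtain k where "k < K" "w k < lo \<or> hi < w k"
        by (auto simp: box_def w'_def PiE_iff split: if_splits)
      then show ?thesis using coercive[of w k] wpos vmax[OF one] by fastforce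
    qed
  qed
qed

lemma quadratic_form_delta_sum:
  assumes k0: "k0 < K"
  defines "e k \<equiv> (if k = k0 then 1 else (0::real))"
  shows "(\<Sum>k<K. \<Sum>l<K. h k * h l * P k l * (e k * v l + v k * e l))
      = 2 * (h k0 * (\<Sum>l<K. P k0 l * h l * v l))"
proof -
  have "(\<Sum>k<K. \<Sum>l<K. h k * h l * P k l * (e k * v l + v k * e l))
     = (\<Sum>k<K. \<Sum>l<K. e k * (h k * h l * P k l * v l)) + (\<Sum>k<K. \<Sum>l<K. e l * (h k * h l * P k l * v k))"
    by (simp add: sum.distrib algebra_simps)
  also have "(\<Sum>k<K. \<Sum>l<K. e k * (h k * h l * P k l * v l)) = (\<Sum>l<K. h k0 * h l * P k0 l * v l)"
  proof -
    have "(\<lambda>k. \<Sum>l<K. e k * (h k * h l * P k l * v l))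
        = (\<lambda>k. if k = k0 then (\<Sum>l<K. h k0 * h l * P k0 l * v l) else 0)"
      by (auto simp: e_def)
    then show ?thesis using k0 by (simp only:) simp
  qed
  also have "(\<Sum>k<K. \<Sum>l<K. e l * (h k * h l * P k l * v k)) = (\<Sum>k<K. h k * h k0 * P k k0 * v k)"
  proof (rule sum.cong[OF refl])
    fix k
    have "(\<lambda>l. e l * (h k * h l * P k l * v k)) = (\<lambda>l. if l = k0 then h k * h k0 * P k k0 * v k else 0)"
      by (auto simp: e_def)
    then show "(\<Sum>l<K. e l * (h k * h l * P k l * v k)) = h k * h k0 * P k k0 * v k"
      using k0 by (simp only:) simp
  qed
  also have "\<dots> = (\<Sum>l<K. h k0 * h l * P k0 l * v l)"
    using k0 by (intro sum.cong) (auto simp: sym mult_ac)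
  finally show ?thesis by (simp add: sum_distrib_left mult_ac)
qed

lemma potential_update_has_derivative:
  assumes k0: "k0 < K" and vpos: "\<And>k. k < K \<Longrightarrow> 0 < v k"
  shows "((\<lambda>s. potential (v(k0 := s))) has_real_derivative
      h k0 / v k0 - h k0 * (\<Sum>l<K. P k0 l * h l * v l)) (at (v k0))"
proof -
  define e where "e k = (if k = k0 then 1 else (0::real))" for k
  have upd: "v(k0 := s) = (\<lambda>k. v k + e k * (s - v k0))" for s
    by (auto simp: e_def)
  have D1: "((\<lambda>s. \<Sum>k<K. h k * ln (v k + e k * (s - v k0))) has_real_derivative
      (\<Sum>k<K. h k * (e k / v k))) (at (v k0))"
    using vpos by (auto intro!: derivative_eq_intros sum.cong simp: field_simps)
  have D2: "((\<lambda>s. \<Sum>k<K. \<Sum>l<K. h k * h l * P k l * (v k + e k * (s - v k0)) * (v l + e l * (s - v k0)))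
      has_real_derivative (\<Sum>k<K. \<Sum>l<K. h k * h l * P k l * (e k * v l + v k * e l))) (at (v k0))"
    by (auto intro!: derivative_eq_intros sum.cong simp: algebra_simps)
  have E1: "(\<Sum>k<K. h k * (e k / v k)) = h k0 / v k0"
  proof -
    have "(\<Sum>k<K. h k * (e k / v k)) = (\<Sum>k<K. if k = k0 then h k0 / v k0 else 0)"
      by (intro sum.cong) (auto simp: e_def)
    then show ?thesis using k0 by simp
  qed
  show ?thesis
    unfolding potential_def upd
    using DERIV_diff[OF D1 DERIV_cdivide[OF D2, of 2]] unfolding E1 quadratic_form_delta_sum[OF k0, folded e_def] by simp
qed

lemma potential_max_stationary:
  assumes vpos: "\<And>k. k < K \<Longrightarrow> 0 < v k"
    and vmax: "\<And>w. (\<And>k. k < K \<Longrightarrow> 0 < w k) \<Longrightarrow> potential w \<le> potential v"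
    and k0: "k0 < K"
  shows "v k0 * (\<Sum>l<K. P k0 l * h l * v l) = 1"
proof -
  have "\<forall>s. \<bar>v k0 - s\<bar> < v k0 \<longrightarrow> potential (v(k0 := s)) \<le> potential (v(k0 := v k0))"
    using vpos by (auto intro!: vmax)
  then have "h k0 / v k0 - h k0 * (\<Sum>l<K. P k0 l * h l * v l) = 0"
    using DERIV_local_max[OF potential_update_has_derivative[of k0 v, OF k0 vpos] vpos[OF k0]] by blast
  then show ?thesis
    using weight_pos[OF k0] vpos[OF k0] by (simp add: field_simps)
qed

lemma scaling_exists:
  obtains v where "\<And>k. k < K \<Longrightarrow> 0 < v k" "\<And>k. k < K \<Longrightarrow> v k * (\<Sum>l<K. P k l * h l * v l) = 1"
proof (rule potential_max_exists)
  fix v assume vpos: "\<And>k. k < K \<Longrightarrow> 0 < v k"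
    and vmax: "\<And>w. (\<And>k. k < K \<Longrightarrow> 0 < w k) \<Longrightarrow> potential w \<le> potential v"
  show thesis
  proof (rule that)
    show "0 < v k" if "k < K" for k using vpos that .
    show "v k * (\<Sum>l<K. P k l * h l * v l) = 1" if "k < K" for k
      using potential_max_stationary[of v, OF vpos vmax that] .
  qed
qed

end

section \<open>Normalized DCBM parameters\<close>

lemma dcbm_normalized_exists:
  assumes Pm: "membership_mat n K Pm" and hpos: "\<And>k. k < K \<Longrightarrow> 0 < comm_frac Pm $ k"
    and par: "dcbm_params n K \<theta> P" and diag: "\<And>k. k < K \<Longrightarrow> 0 < P $$ (k,k)" and n: "0 < n"
  obtains \<theta>' P' where "dcbm_params n K \<theta>' P'" "dcbm_Omega \<theta>' Pm P' = dcbm_Omega \<theta> Pm P"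
    "dcbm_normalized n K \<theta>' Pm P'"
proof -
  define c where "c = community K Pm"
  define h where "h = comm_frac Pm"
  note \<theta>P = dcbm_paramsD[OF par]
  interpret weighted_sym_matrix K "\<lambda>k. h $ k" "\<lambda>k l. P $$ (k,l)"
    using hpos diag \<theta>P(4,5) by unfold_locales (simp_all add: h_def)
  obtain v where vpos: "\<And>k. k < K \<Longrightarrow> 0 < v k"
    and vrow: "\<And>k. k < K \<Longrightarrow> v k * (\<Sum>l<K. P $$ (k,l) * h $ l * v l) = 1"
    using scaling_exists by blast
  have cK: "c i < K" if "i < n" for i using community(1)[OF Pm that] by (simp add: c_def)
  define s where "s = (\<Sum>i<n. \<theta> $ i / v (c i))"
  have "0 < s" unfolding s_def using n \<theta>P(2) vpos cK by (intro sum_pos) auto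
  define \<mu> where "\<mu> = real n / s"
  have "0 < \<mu>" using n \<open>0 < s\<close> by (simp add: \<mu>_def)
  define w where "w k = \<mu> / v k" for k
  have wpos: "0 < w k" if "k < K" for k using \<open>0 < \<mu>\<close> vpos[OF that] by (simp add: w_def)
  define \<theta>' where "\<theta>' = vec n (\<lambda>i. w (c i) * \<theta> $ i)"
  define P' where "P' = mat K K (\<lambda>(k,l). P $$ (k,l) / (w k * w l))"
  show thesis
  proof
    show "dcbm_params n K \<theta>' P'"
      using \<theta>P wpos cK
      by (auto simp: dcbm_params_def \<theta>'_def P'_def mult.commute intro!: divide_nonneg_pos)
    show "dcbm_Omega \<theta>' Pm P' = dcbm_Omega \<theta> Pm P"
      unfolding \<theta>'_def P'_def c_def
      using dcbm_Omega_rescale[OF Pm \<theta>P(1,3), of w] wpos by (simp add: less_imp_neq[symmetric])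
    have "(\<Sum>i<n. \<bar>\<theta>' $ i\<bar>) = (\<Sum>i<n. \<mu> * (\<theta> $ i / v (c i)))"
    proof (intro sum.cong refl)
      fix i assume i: "i \<in> {..<n}"
      then have "0 < \<theta> $ i" "0 < v (c i)" using \<theta>P(2) vpos cK by auto
      then show "\<bar>\<theta>' $ i\<bar> = \<mu> * (\<theta> $ i / v (c i))" using i \<open>0 < \<mu>\<close> by (simp add: \<theta>'_def w_def)
    qed
    also have "\<dots> = \<mu> * s" by (simp add: s_def sum_distrib_left)
    also have "\<dots> = real n" using \<open>0 < s\<close> by (simp add: \<mu>_def)
    finally have "(\<Sum>i<n. \<bar>\<theta>' $ i\<bar>) = real n" .
    moreover have "(\<Sum>l<K. P' $$ (k,l) * h $ l) = 1 / \<mu>^2" if k: "k < K" for k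
    proof -
      have "(\<Sum>l<K. P' $$ (k,l) * h $ l) = (\<Sum>l<K. v k * (P $$ (k,l) * h $ l * v l) / \<mu>^2)"
        using k \<open>0 < \<mu>\<close> by (intro sum.cong) (auto simp: P'_def w_def power2_eq_square)
      also have "\<dots> = 1 / \<mu>^2"
        using vrow[OF k] by (simp add: sum_divide_distrib[symmetric] sum_distrib_left[symmetric])
      finally show ?thesis .
    qed
    ultimately show "dcbm_normalized n K \<theta>' Pm P'"
      unfolding dcbm_normalized_def h_def using \<open>0 < \<mu>\<close>
      by (subst mult_mat_vec_eq_const_iff) (auto simp: P'_def comm_frac_dim[OF Pm] intro!: exI[of _ "1 / \<mu>^2"])
  qed
qed

lemma dcbm_same_Omega_scaling:
  assumes Pm: "membership_mat n K Pm" and surj: "\<And>k. k < K \<Longrightarrow> \<exists>i<n. community K Pm i = k"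
    and par1: "dcbm_params n K \<theta>1 P1" and par2: "dcbm_params n K \<theta>2 P2"
    and eq: "dcbm_Omega \<theta>1 Pm P1 = dcbm_Omega \<theta>2 Pm P2"
    and diag: "\<And>k. k < K \<Longrightarrow> 0 < P1 $$ (k,k)"
  obtains v where "\<And>k. k < K \<Longrightarrow> 0 < v k" "\<And>i. i < n \<Longrightarrow> \<theta>1 $ i = v (community K Pm i) * \<theta>2 $ i"
    "\<And>k l. k < K \<Longrightarrow> l < K \<Longrightarrow> P2 $$ (k,l) = v k * v l * P1 $$ (k,l)"
proof -
  define c where "c = community K Pm"
  note p1 = dcbm_paramsD[OF par1] and p2 = dcbm_paramsD[OF par2]
  have e: "\<theta>1 $ i * \<theta>1 $ j * P1 $$ (c i, c j) = \<theta>2 $ i * \<theta>2 $ j * P2 $$ (c i, c j)"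
    if "i < n" "j < n" for i j
    using eq that unfolding c_def dcbm_Omega_eq_iff[OF Pm p1(1,3) p2(1,3)] by blast
  define v where "v k = sqrt (P2 $$ (k,k) / P1 $$ (k,k))" for k
  have \<theta>_eq: "\<theta>1 $ i = v (c i) * \<theta>2 $ i" if i: "i < n" for i
  proof -
    have "0 < P1 $$ (c i, c i)" using diag community(1)[OF Pm i] by (simp add: c_def)
    then have "\<theta>1 $ i ^ 2 = \<theta>2 $ i ^ 2 * (P2 $$ (c i, c i) / P1 $$ (c i, c i))"
      using e[OF i i] by (simp add: field_simps power2_eq_square)
    then have "sqrt (\<theta>1 $ i ^ 2) = sqrt (\<theta>2 $ i ^ 2) * v (c i)"
      unfolding v_def by (metis real_sqrt_mult)
    then show ?thesis using p1(2)[OF i] p2(2)[OF i] by simp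
  qed
  show thesis
  proof
    show "0 < v k" if k: "k < K" for k
    proof -
      obtain i where i: "i < n" "c i = k" using surj[OF k] by (auto simp: c_def)
      have "0 < \<theta>1 $ i" "0 < \<theta>2 $ i" using p1(2) p2(2) i by auto
      then show ?thesis using \<theta>_eq[OF i(1)] i(2) by (simp add: zero_less_mult_iff)
    qed
    show "P2 $$ (k,l) = v k * v l * P1 $$ (k,l)" if kl: "k < K" "l < K" for k l
    proof -
      obtain i where "i < n" "c i = k" using surj[OF kl(1)] by (auto simp: c_def)
      moreover obtain j where "j < n" "c j = l" using surj[OF kl(2)] by (auto simp: c_def)
      ultimately have ij: "i < n" "c i = k" "j < n" "c j = l" by blast+
      then have "\<theta>2 $ i * \<theta>2 $ j * P2 $$ (k,l) = \<theta>2 $ i * \<theta>2 $ j * (v k * v l * P1 $$ (k,l))"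
        using e[OF ij(1,3)] unfolding \<theta>_eq[OF ij(1)] \<theta>_eq[OF ij(3)] ij(2,4)
        by (simp add: algebra_simps) metis
      moreover have "\<theta>2 $ i * \<theta>2 $ j \<noteq> 0" using p2(2) ij by (simp add: less_imp_neq[symmetric])
      ultimately show ?thesis by simp
    qed
  qed (use \<theta>_eq in \<open>simp add: c_def\<close>)
qed

lemma dcbm_normalized_rows:
  assumes Pm: "membership_mat n K Pm" and par: "dcbm_params n K \<theta> P"
    and norm: "dcbm_normalized n K \<theta> Pm P"
  obtains t where "0 < t" "\<And>k. k < K \<Longrightarrow> (\<Sum>l<K. P $$ (k,l) * comm_frac Pm $ l) = t"
  using norm mult_mat_vec_eq_const_iff[OF dcbm_paramsD(3)[OF par] comm_frac_dim[OF Pm]]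
  unfolding dcbm_normalized_def by blast

lemma dcbm_normalized_unique:
  assumes Pm: "membership_mat n K Pm" and hpos: "\<And>k. k < K \<Longrightarrow> 0 < comm_frac Pm $ k"
    and n: "0 < n"
    and par1: "dcbm_params n K \<theta>1 P1" and norm1: "dcbm_normalized n K \<theta>1 Pm P1"
    and par2: "dcbm_params n K \<theta>2 P2" and norm2: "dcbm_normalized n K \<theta>2 Pm P2"
    and eq: "dcbm_Omega \<theta>1 Pm P1 = dcbm_Omega \<theta>2 Pm P2"
    and diag: "\<And>k. k < K \<Longrightarrow> 0 < P1 $$ (k,k)"
  shows "\<theta>1 = \<theta>2 \<and> P1 = P2"
proof -
  define c where "c = community K Pm"
  define h where "h = comm_frac Pm"
  note p1 = dcbm_paramsD[OF par1] and p2 = dcbm_paramsD[OF par2]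
  obtain v where vpos: "\<And>k. k < K \<Longrightarrow> 0 < v k" and \<theta>_eq: "\<And>i. i < n \<Longrightarrow> \<theta>1 $ i = v (c i) * \<theta>2 $ i"
    and P_eq: "\<And>k l. k < K \<Longrightarrow> l < K \<Longrightarrow> P2 $$ (k,l) = v k * v l * P1 $$ (k,l)"
    using dcbm_same_Omega_scaling[OF Pm community_surj[OF Pm _ hpos] par1 par2 eq diag]
    unfolding c_def by blast
  obtain t1 where "0 < t1" and rows1: "\<And>k. k < K \<Longrightarrow> (\<Sum>l<K. P1 $$ (k,l) * h $ l) = t1"
    using dcbm_normalized_rows[OF Pm par1 norm1] unfolding h_def by blast
  obtain t2 where rows2: "\<And>k. k < K \<Longrightarrow> (\<Sum>l<K. P2 $$ (k,l) * h $ l) = t2"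
    using dcbm_normalized_rows[OF Pm par2 norm2] unfolding h_def by blast
  interpret weighted_sym_matrix K "\<lambda>k. h $ k" "\<lambda>k l. P1 $$ (k,l)"
    using hpos diag p1(4,5) by unfold_locales (simp_all add: h_def)
  have scaled_rows: "v k * (\<Sum>l<K. P1 $$ (k,l) * h $ l * v l) = t2" if k: "k < K" for k
    unfolding rows2[OF k, symmetric] sum_distrib_left using k by (intro sum.cong) (simp_all add: P_eq)
  have "v k ^ 2 * t1 = t2" if "k < K" for k
    by (rule scaling_const[where v = v]) (use that \<open>0 < t1\<close> rows1 vpos scaled_rows in auto)
  then have v_const: "v k = sqrt (t2 / t1)" if "k < K" for k
    using that vpos[OF that] \<open>0 < t1\<close> by (metis nonzero_mult_div_cancel_right real_sqrt_unique less_imp_le less_irrefl)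
  have "0 < sqrt (t2 / t1)" using vpos v_const community(1)[OF Pm n] by metis
  have "real n = (\<Sum>i<n. \<bar>\<theta>1 $ i\<bar>)" using norm1 by (simp add: dcbm_normalized_def)
  also have "\<dots> = (\<Sum>i<n. sqrt (t2 / t1) * \<bar>\<theta>2 $ i\<bar>)"
    using \<theta>_eq v_const community(1)[OF Pm] \<open>0 < sqrt (t2 / t1)\<close>
    by (intro sum.cong) (auto simp: c_def abs_mult)
  also have "\<dots> = sqrt (t2 / t1) * real n" using norm2 by (simp add: dcbm_normalized_def flip: sum_distrib_left)
  finally have "sqrt (t2 / t1) = 1" using n by simp
  then have "\<forall>k<K. v k = 1" using v_const by simp
  then show ?thesis
    using \<theta>_eq P_eq p1(1,3) p2(1,3) community(1)[OF Pm]
    by (auto simp: c_def intro!: eq_vecI eq_matI)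
qed

theorem lemma1:
  fixes n K :: nat and \<Omega> Pm P :: "real mat" and \<theta> :: "real vec"
  assumes "membership_mat n K Pm"
    and "\<forall>k<K. comm_frac Pm $ k > 0"
    and "dcbm_params n K \<theta> P"
    and "\<Omega> = dcbm_Omega \<theta> Pm P"
    and "\<forall>i<n. \<forall>j<n. \<Omega> $$ (i,j) \<le> 1"
    and "\<forall>i<n. \<Omega> $$ (i,i) > 0"
  shows "(\<exists>\<theta>' P'. dcbm_params n K \<theta>' P' \<and> \<Omega> = dcbm_Omega \<theta>' Pm P'
            \<and> dcbm_normalized n K \<theta>' Pm P')
       \<and> (\<forall>\<theta>1 P1 \<theta>2 P2.
            dcbm_params n K \<theta>1 P1 \<and> \<Omega> = dcbm_Omega \<theta>1 Pm P1 \<and> dcbm_normalized n K \<theta>1 Pm P1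
          \<and> dcbm_params n K \<theta>2 P2 \<and> \<Omega> = dcbm_Omega \<theta>2 Pm P2 \<and> dcbm_normalized n K \<theta>2 Pm P2
          \<longrightarrow> \<theta>1 = \<theta>2 \<and> P1 = P2)"
proof -
  note Pm = assms(1) and par = assms(3) and \<Omega> = assms(4)
  have hpos: "\<And>k. k < K \<Longrightarrow> 0 < comm_frac Pm $ k" using assms(2) by blast
  have diag: "0 < P' $$ (k,k)" if "dcbm_params n K \<theta>' P'" "\<Omega> = dcbm_Omega \<theta>' Pm P'" "k < K" for \<theta>' P' k
    using community_surj[OF Pm that(3) hpos[OF that(3)]] dcbm_Omega_diag_pos[OF Pm that(1)] assms(6) that(2)
    by metis
  show ?thesis
  proof (cases "n = 0")
    case True
    then have "K = 0" using community_surj[OF Pm _ hpos] by blast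
    then have "dcbm_normalized n K \<theta> Pm P"
      using True dcbm_paramsD(3)[OF par]
      by (auto simp: dcbm_normalized_def vec_eq_iff comm_frac_dim[OF Pm] intro!: exI[of _ 1])
    then show ?thesis
      using par \<Omega> \<open>K = 0\<close> True by (auto simp: dcbm_params_def intro!: eq_vecI eq_matI)
  next
    case False
    then have "0 < n" by simp
    obtain \<theta>' P' where "dcbm_params n K \<theta>' P'" "dcbm_Omega \<theta>' Pm P' = \<Omega>" "dcbm_normalized n K \<theta>' Pm P'"
      using dcbm_normalized_exists[OF Pm hpos par diag[OF par \<Omega>] \<open>0 < n\<close>] \<Omega> by metis
    moreover have "\<theta>1 = \<theta>2 \<and> P1 = P2"
      if "dcbm_params n K \<theta>1 P1" "\<Omega> = dcbm_Omega \<theta>1 Pm P1" "dcbm_normalized n K \<theta>1 Pm P1"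
        "dcbm_params n K \<theta>2 P2" "\<Omega> = dcbm_Omega \<theta>2 Pm P2" "dcbm_normalized n K \<theta>2 Pm P2"
      for \<theta>1 P1 \<theta>2 P2
      using dcbm_normalized_unique[OF Pm hpos \<open>0 < n\<close> that(1,3,4,6)] diag[OF that(1,2)] that(2,5) by simp
    ultimately show ?thesis by metis
  qed
qed

end
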